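(* In the two-period model with a transparent bailout and $p_0<p_g<1-S$, suppose a short-lived stimulation equilibrium exists. Then in that equilibrium: (i) $\bar\theta_g<\bar\theta_m<p_g$; (ii) $\hat\theta<\theta_0<\hat\theta_g=p_g+S$; (iii) $p_g<2\theta_0-\mathbb{E}[\theta\mid\theta\le\theta_0]$.
   Context: Two-period model: a continuum of firms with privately known type $\theta\in[0,1]$, cdf $F$, density $f>0$, $f$ strictly log-concave, and for every $b\in(0,1]$ the map $a\mapsto 2\mathbb{E}[\theta\mid a<\theta<b]-\mathbb{E}[\theta\mid\theta\le a]$ is increasing on $(0,b)$. A type-$\theta$ firm holds one unit of an asset worth $\theta$ in each of two periods $t=1,2$. In each period it has a project with cost $I>0$ and net return $S>0$ that can be funded only by selling that period's unit; selling that unit at price $p\ge I$ yields $p+S$ for that period, not selling yields $\theta$. A firm's total payoff is the sum of the two periods' payoffs (period-2 payoff weighted by $\delta<1$, and equilibria are considered in the limit $\delta\to1$). In each period competitive short-lived risk-neutral buyers make price offers (Bertrand; break even in expectation; indifferent buyers buy). At $t=1$ only, the government offers to buy one unit at price $p_g$; each firm then sells its $t=1$ unit to the government, to the market, or not at all. Sales to the market at $t=1$ are not observed by $t=2$ buyers. Transparent bailout: acceptance of the government offer is observed by $t=2$ buyers, who may make different offers to bailout recipients and non-recipients. Equilibrium means perfect Bayesian equilibrium. Laissez-faire: $\theta_0\in(0,1)$ uniquely solves $\theta_0-S=\mathbb{E}[\theta\mid\theta\le\theta_0]$, $p_0:=\mathbb{E}[\theta\mid\theta\le\theta_0]$, and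 $p_0\ge I$. Equilibrium structure: every equilibrium has cutoffs $0<\hat\theta\le\hat\theta_g\le\theta_2$ such that types $\theta\le\hat\theta$ sell in both periods, types in $(\hat\theta,\hat\theta_g]$ sell only at $t=1$ to the government, types in $(\hat\theta_g,\theta_2]$ sell only at $t=2$, and types above $\theta_2$ never sell. Among types $\theta\le\hat\theta$, $\mu_g$ and $\mu_m=1-\mu_g$ denote the fractions selling at $t=1$ to the government and to the market, and $\bar\theta_g$, $\bar\theta_m$ the average asset values of these two groups. A short-lived stimulation equilibrium is an equilibrium with $\hat\theta_g=\theta_2$; a delayed stimulation equilibrium is one with $\hat\theta_g<\theta_2$. *)

theory Defs
  imports "HOL-Analysis.Analysis"
begin

text \<open>Type distribution: density f on [0,1] (the cdf F is the integral of f).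
  Conditional expectation of theta given a <= theta <= b (open/closed endpoints
  are immaterial for an atomless distribution).\<close>

definition cexp :: "(real \<Rightarrow> real) \<Rightarrow> real \<Rightarrow> real \<Rightarrow> real" where
  "cexp f a b = integral {a..b} (\<lambda>x. x * f x) / integral {a..b} f"

definition strictly_log_concave_on :: "real set \<Rightarrow> (real \<Rightarrow> real) \<Rightarrow> bool" where
  "strictly_log_concave_on A f \<longleftrightarrow>
     (\<forall>x\<in>A. \<forall>y\<in>A. \<forall>t. x \<noteq> y \<and> 0 < t \<and> t < 1 \<longrightarrow>
        ln (f ((1 - t) * x + t * y)) > (1 - t) * ln (f x) + t * ln (f y))"

text \<open>Payoff (in one period) of selling the unit of that period at price p:
  p + S if the project can be funded (p >= I), otherwise just p.\<close>

definition sale :: "real \<Rightarrow> real \<Rightarrow> real \<Rightarrow> real" where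
  "sale I S p = (if I \<le> p then p + S else p)"

section \<open>Plans of a firm (limit delta -> 1: undiscounted sum of both periods)\<close>

datatype t1choice = Gov | Mkt | NoSale

type_synonym plan = "t1choice \<times> bool"  \<comment> \<open>t=1 choice, sell at t=2?\<close>

definition plans :: "plan set" where
  "plans = {Gov, Mkt, NoSale} \<times> UNIV"

text \<open>Total payoff of type theta following a plan, given the government price pg,
  the t=1 market price p1, and the t=2 prices qg (bailout recipients) and qn
  (non-recipients): the transparent bailout lets t=2 buyers condition on
  acceptance of the government offer; t=1 market sales are not observed.\<close>

definition plan_pay ::
  "real \<Rightarrow> real \<Rightarrow> real \<Rightarrow> real \<Rightarrow> real \<Rightarrow> real \<Rightarrow> real \<Rightarrow> plan \<Rightarrow> real" where
  "plan_pay I S pg p1 qg qn \<theta> pl =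
     (case fst pl of Gov \<Rightarrow> sale I S pg | Mkt \<Rightarrow> sale I S p1 | NoSale \<Rightarrow> \<theta>)
     + (if snd pl then sale I S (if fst pl = Gov then qg else qn) else \<theta>)"

definition value_fn :: "real \<Rightarrow> real \<Rightarrow> real \<Rightarrow> real \<Rightarrow> real \<Rightarrow> real \<Rightarrow> real \<Rightarrow> real" where
  "value_fn I S pg p1 qg qn \<theta> = (MAX pl \<in> plans. plan_pay I S pg p1 qg qn \<theta> pl)"

definition strat ::
  "real \<Rightarrow> real \<Rightarrow> real \<Rightarrow> (real \<Rightarrow> real) \<Rightarrow> real \<Rightarrow> plan \<Rightarrow> real" where
  "strat th thg th2 sig \<theta> pl =
     (if \<theta> \<le> th then
        (if pl = (Gov, True) then sig \<theta> else if pl = (Mkt, True) then 1 - sig \<theta> else 0)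
      else if \<theta> \<le> thg then (if pl = (Gov, False) then 1 else 0)
      else if \<theta> \<le> th2 then (if pl = (NoSale, True) then 1 else 0)
      else (if pl = (NoSale, False) then 1 else 0))"

definition profit :: "(real \<Rightarrow> real) \<Rightarrow> (real \<Rightarrow> real) \<Rightarrow> real \<Rightarrow> real" where
  "profit f w q = integral {0..1} (\<lambda>\<theta>. w \<theta> * f \<theta> * (\<theta> - q))"

text \<open>Conditions: (1) cutoff structure, sig measurable with values in [0,1];
  (2) every type's plan(s) are optimal given the prices;
  (3) competitive (Bertrand) buyers in each market:
      equilibrium offers do not lose money, and no buyer can profitably deviate
      to another offer, where a deviating offer is accepted by exactly the types
      for which accepting it is strictly better than their equilibrium payoff
      (continuation play and t=2 beliefs unchanged, as t=1 market sales are unobserved).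
  t=2 market populations (Bayes' rule): recipients = types that sold to the government
  at t=1; non-recipients = all other types.\<close>

definition transparent_eq ::
  "real \<Rightarrow> real \<Rightarrow> real \<Rightarrow> (real \<Rightarrow> real) \<Rightarrow> real \<Rightarrow> real \<Rightarrow> real \<Rightarrow> (real \<Rightarrow> real)
    \<Rightarrow> real \<Rightarrow> real \<Rightarrow> real \<Rightarrow> bool" where
  "transparent_eq I S pg f th thg th2 sig p1 qg qn \<longleftrightarrow>
     (let \<pi> = strat th thg th2 sig;
          V = value_fn I S pg p1 qg qn;
          gov = (\<lambda>\<theta>. \<pi> \<theta> (Gov, True) + \<pi> \<theta> (Gov, False));
          mkt = (\<lambda>\<theta>. \<pi> \<theta> (Mkt, True) + \<pi> \<theta> (Mkt, False));
          nonrec = (\<lambda>\<theta>. 1 - gov \<theta>);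
          sellR = (\<lambda>\<theta>. \<pi> \<theta> (Gov, True));
          sellN = (\<lambda>\<theta>. \<pi> \<theta> (Mkt, True) + \<pi> \<theta> (NoSale, True))
      in 0 < th \<and> th \<le> thg \<and> thg \<le> th2 \<and> th2 \<le> 1
       \<and> sig \<in> borel_measurable borel
       \<and> (\<forall>\<theta>\<in>{0..th}. 0 \<le> sig \<theta> \<and> sig \<theta> \<le> 1)
       \<and> (\<forall>\<theta>\<in>{0..1}. \<forall>pl. 0 < \<pi> \<theta> pl \<longrightarrow> plan_pay I S pg p1 qg qn \<theta> pl = V \<theta>)
       \<and> profit f mkt p1 \<ge> 0
       \<and> (\<forall>p'. profit f (\<lambda>\<theta>. indicator {\<theta>. sale I S p' + max (sale I S qn) \<theta> > V \<theta>} \<theta>) p' \<le> 0)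
       \<and> profit f sellR qg \<ge> 0
       \<and> (\<forall>q'. profit f (\<lambda>\<theta>. gov \<theta> * indicator {\<theta>. sale I S q' > max (sale I S qg) \<theta>} \<theta>) q' \<le> 0)
       \<and> profit f sellN qn \<ge> 0
       \<and> (\<forall>q'. profit f (\<lambda>\<theta>. nonrec \<theta> * indicator {\<theta>. sale I S q' > max (sale I S qn) \<theta>} \<theta>) q' \<le> 0))"

text \<open>Average asset value of the types theta <= th selling at t=1 to the government
  (theta_bar_g) resp. to the market (theta_bar_m).\<close>

definition avg_gov :: "(real \<Rightarrow> real) \<Rightarrow> real \<Rightarrow> (real \<Rightarrow> real) \<Rightarrow> real" where
  "avg_gov f th sig = integral {0..th} (\<lambda>\<theta>. \<theta> * sig \<theta> * f \<theta>) / integral {0..th} (\<lambda>\<theta>. sig \<theta> * f \<theta>)"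

definition avg_mkt :: "(real \<Rightarrow> real) \<Rightarrow> real \<Rightarrow> (real \<Rightarrow> real) \<Rightarrow> real" where
  "avg_mkt f th sig = integral {0..th} (\<lambda>\<theta>. \<theta> * (1 - sig \<theta>) * f \<theta>) / integral {0..th} (\<lambda>\<theta>. (1 - sig \<theta>) * f \<theta>)"

end

theory Submission
  imports Defs
begin

(* Log-concavity makes x - E[theta | theta <= x] strictly increasing, so E[theta | theta <= x]
   exceeds x - S exactly below theta0.  At t = 2 buyers break even and type th is willing to sell,
   so each group of low sellers has average value at least th - S, whence
   E[theta | theta <= th] >= th - S.  If no type sold
   only to the government, types just above th would never sell, which forces th >= pg + S > theta0,
   a contradiction.  Otherwise indifference of the marginal recipient gives thg = pg + S, the types
   in (th, thg] pin the recipients' t = 2 payoff to th, so recipients trade at their average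
   th - S and non-recipients at their average qn, and undercutting at t = 1 forces p1 <= qn.
   With pg = p1 + qn + S - th, the claims follow once qn > th - S; equality would make th a
   solution of x - S = E[theta | theta <= x] above theta0. *)

section \<open>Strictly log-concave densities\<close>

lemma strictly_log_concave_onD:
  assumes "strictly_log_concave_on A f" "x \<in> A" "y \<in> A" "x \<noteq> y" "0 < t" "t < 1"
  shows "(1 - t) * ln (f x) + t * ln (f y) < ln (f ((1 - t) * x + t * y))"
  using assms unfolding strictly_log_concave_on_def by blast

lemma strictly_log_concave_on_ge_min_endpoints:
  fixes f :: "real \<Rightarrow> real"
  assumes f_pos: "\<forall>x\<in>{0..1}. f x > 0" and f_lc: "strictly_log_concave_on {0..1} f"
    and x: "x \<in> {0..1}"
  shows "min (f 0) (f 1) \<le> f x"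
proof (cases "x = 0 \<or> x = 1")
  case True then show ?thesis by auto
next
  case False
  with x have x01: "0 < x" "x < 1" by auto
  define m where "m = min (f 0) (f 1)"
  have m0: "0 < m" using f_pos by (simp add: m_def)
  have "ln m \<le> ln (f 0)" "ln m \<le> ln (f 1)" using m0 by (auto simp: m_def)
  have "ln m = (1 - x) * ln m + x * ln m" by (simp add: algebra_simps)
  also have "\<dots> \<le> (1 - x) * ln (f 0) + x * ln (f 1)"
    using \<open>ln m \<le> ln (f 0)\<close> \<open>ln m \<le> ln (f 1)\<close> x01 by (intro add_mono mult_left_mono) auto
  also have "\<dots> < ln (f x)"
    using strictly_log_concave_onD[OF f_lc, of 0 1 x] x01 by simp
  finally show ?thesis using m0 f_pos x by (simp add: m_def)
qed

lemma strictly_log_concave_on_mult_reflect_le: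
  fixes f :: "real \<Rightarrow> real"
  assumes f_pos: "\<forall>x\<in>{0..1}. f x > 0" and f_lc: "strictly_log_concave_on {0..1} f"
    and x: "x \<in> {0..1}"
  shows "f x * f (1 - x) \<le> f (1/2)^2"
proof (cases "x = 1/2")
  case True then show ?thesis unfolding True by (simp add: power2_eq_square)
next
  case False
  have "(1 - 1/2) * ln (f x) + 1/2 * ln (f (1 - x)) < ln (f ((1 - 1/2) * x + 1/2 * (1 - x)))"
    using strictly_log_concave_onD[OF f_lc, of x "1 - x" "1/2"] x False by auto
  moreover have "(1 - 1/2) * x + 1/2 * (1 - x) = (1/2::real)" by (simp add: field_simps)
  ultimately have "(1 - 1/2) * ln (f x) + 1/2 * ln (f (1 - x)) < ln (f (1/2))" by metis
  then have "ln (f x) + ln (f (1 - x)) < 2 * ln (f (1/2))" by simp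
  moreover have pos: "f x > 0" "f (1 - x) > 0" "f (1/2) > 0" using f_pos x by auto
  ultimately have "ln (f x * f (1 - x)) < ln (f (1/2)^2)" by (simp add: ln_mult ln_realpow)
  then show ?thesis using pos by (subst (asm) ln_less_cancel_iff) auto
qed

lemma strictly_log_concave_on_bounds:
  fixes f :: "real \<Rightarrow> real"
  assumes f_pos: "\<forall>x\<in>{0..1}. f x > 0" and f_lc: "strictly_log_concave_on {0..1} f"
  obtains m K where "0 < m" "\<forall>x\<in>{0..1}. m \<le> f x \<and> f x \<le> K"
proof
  define m where "m = min (f 0) (f 1)"
  show m0: "0 < m" using f_pos by (simp add: m_def)
  show "\<forall>x\<in>{0..1}. m \<le> f x \<and> f x \<le> f (1/2)^2 / m"
  proof
    fix x :: real assume x: "x \<in> {0..1}"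
    have low: "m \<le> f y" if "y \<in> {0..1}" for y
      using strictly_log_concave_on_ge_min_endpoints[OF f_pos f_lc that] by (simp add: m_def)
    have "f x * m \<le> f x * f (1 - x)"
      using low[of "1 - x"] f_pos x by (intro mult_left_mono) (auto intro: less_imp_le)
    also have "\<dots> \<le> f (1/2)^2" by (rule strictly_log_concave_on_mult_reflect_le[OF f_pos f_lc x])
    finally show "m \<le> f x \<and> f x \<le> f (1/2)^2 / m" using low[OF x] m0 by (simp add: field_simps)
  qed
qed

lemma strictly_log_concave_on_shift_ratio:
  fixes f :: "real \<Rightarrow> real"
  assumes f_pos: "\<forall>x\<in>{0..1}. f x > 0" and f_lc: "strictly_log_concave_on {0..1} f"
    and k: "0 < k" and uv: "0 \<le> u" "u \<le> v" "k + v \<le> 1"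
  shows "f (k + v) * f u \<le> f (k + u) * f v"
proof (cases "u = v")
  case True then show ?thesis by simp
next
  case False
  with uv have uv': "u < v" by simp
  define t where "t = (v - u) / (k + v - u)"
  have t01: "0 < t" "t < 1" using uv' k by (auto simp: t_def field_simps)
  have mem: "u \<in> {0..1}" "k + v \<in> {0..1}" using uv k by auto
  have ne: "u \<noteq> k + v" using k uv' by simp
  have tL: "t * (k + v - u) = v - u" using k uv' by (simp add: t_def)
  have e1: "(1 - t) * u + t * (k + v) = v" and e2: "(1 - (1 - t)) * u + (1 - t) * (k + v) = k + u"
    using tL by (simp_all add: algebra_simps)
  have "ln (f u) + ln (f (k + v)) < ln (f v) + ln (f (k + u))"
    using strictly_log_concave_onD[OF f_lc mem ne t01] strictly_log_concave_onD[OF f_lc mem ne, of "1 - t"]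
      t01 unfolding e1 e2 by (simp add: algebra_simps)
  moreover have "f u > 0" "f v > 0" "f (k + u) > 0" "f (k + v) > 0" using f_pos mem uv k by auto
  ultimately have "ln (f (k + v) * f u) < ln (f (k + u) * f v)" by (simp add: ln_mult algebra_simps)
  then show ?thesis using \<open>f u > 0\<close> \<open>f v > 0\<close> \<open>f (k + u) > 0\<close> \<open>f (k + v) > 0\<close> by simp
qed

section \<open>Truncated means\<close>

lemma bounded_measurable_mult_integrable:
  fixes f W :: "real \<Rightarrow> real"
  assumes f_int: "f integrable_on {0..1}" and f_nn: "\<forall>x\<in>{0..1}. 0 \<le> f x"
    and ab: "{a..b} \<subseteq> {0..1}" and W: "W \<in> borel_measurable borel"
    and B: "\<forall>x\<in>{a..b}. \<bar>W x\<bar> \<le> B"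
  shows "(\<lambda>x. W x * f x) integrable_on {a..b}"
proof -
  have "f absolutely_integrable_on {a..b}"
    using nonnegative_absolutely_integrable_1 integrable_on_subinterval[OF f_int ab] f_nn ab by blast
  moreover have "W \<in> borel_measurable (lebesgue_on {a..b})"
    using W by (intro measurable_restrict_space1 measurable_completion) (simp add: measurable_lborel1)
  moreover have "bounded (W ` {a..b})" using B by (auto simp: bounded_real)
  ultimately have "(\<lambda>x. W x * f x) absolutely_integrable_on {a..b}"
    by (intro absolutely_integrable_bounded_measurable_product_real) auto
  then show ?thesis using set_lebesgue_integral_eq_integral(1) by blast
qed

lemma integral_mult_id_lt_right_endpoint:
  fixes f W :: "real \<Rightarrow> real"
  assumes f_int: "f integrable_on {0..1}" and f_nn: "\<forall>x\<in>{0..1}. 0 \<le> f x"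
    and f_le: "\<forall>x\<in>{0..1}. f x \<le> K"
    and b: "0 < b" "b \<le> 1" and W: "W \<in> borel_measurable borel"
    and W01: "\<forall>x\<in>{0..b}. 0 \<le> W x \<and> W x \<le> 1"
    and pos: "integral {0..b} (\<lambda>x. W x * f x) > 0"
  shows "integral {0..b} (\<lambda>x. x * W x * f x) < b * integral {0..b} (\<lambda>x. W x * f x)"
proof -
  define K' where "K' = max K 1"
  define IW where "IW = integral {0..b} (\<lambda>x. W x * f x)"
  define IT where "IT = integral {0..b} (\<lambda>x. x * W x * f x)"
  \<comment> \<open>the mass of W f within e of b is at most K' e \<le> IW/2, so the mean stays e/2 below b\<close>
  define e where "e = min b (IW / (2 * K'))"
  have K'0: "K' > 0" by (simp add: K'_def)
  have e0: "e > 0" using b pos K'0 by (simp add: e_def IW_def)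
  have eb: "e \<le> b" and eK: "K' * e \<le> IW / 2" using K'0 by (auto simp: e_def field_simps min_def)
  have sub: "{0..b} \<subseteq> {0..1}" using b by auto
  have int1: "(\<lambda>x. W x * f x) integrable_on {0..b}"
    using W01 by (intro bounded_measurable_mult_integrable[OF f_int f_nn sub W, of 1]) auto
  have "\<forall>x\<in>{0..b}. \<bar>x * W x\<bar> \<le> 1" using W01 b by (auto simp: abs_mult intro!: mult_le_one)
  then have int2: "(\<lambda>x. x * W x * f x) integrable_on {0..b}"
    using bounded_measurable_mult_integrable[OF f_int f_nn sub, of "\<lambda>x. x * W x" 1] W by simp
  define cap where "cap = (\<lambda>x::real. if x \<in> {b - e..b} then K' else 0)"
  have inter: "{b - e..b} \<inter> {0..b} = {b - e..b}" using eb by auto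
  have int3: "cap integrable_on {0..b}"
    unfolding cap_def integrable_restrict_Int inter by (rule integrable_const_ivl)
  have icap: "integral {0..b} cap = K' * e"
    unfolding cap_def integral_restrict_Int inter using e0 by simp
  have pw: "e * (W x * f x - cap x) \<le> (b - x) * (W x * f x)" if x: "x \<in> {0..b}" for x
  proof -
    have "0 \<le> W x" "W x \<le> 1" "0 \<le> f x" "f x \<le> K" using W01 f_nn f_le x b by auto
    then have Wf: "0 \<le> W x * f x" "W x * f x \<le> K'"
      by (auto simp: K'_def intro: order_trans[OF mult_right_mono[of "W x" 1 "f x"]])
    show ?thesis
    proof (cases "x \<in> {b - e..b}")
      case True
      then show ?thesis using Wf e0 x by (simp add: cap_def mult_nonneg_nonpos order_trans[of _ 0])
    next
      case False
      then show ?thesis using Wf x by (simp add: cap_def mult_right_mono)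
    qed
  qed
  have "e * (IW - K' * e) = integral {0..b} (\<lambda>x. e * (W x * f x - cap x))"
    using integral_diff[OF int1 int3] icap by (simp add: IW_def)
  also have "\<dots> \<le> integral {0..b} (\<lambda>x. (b - x) * (W x * f x))"
    using int1 int2 int3 pw
    by (intro integral_le) (auto intro!: integrable_diff integrable_on_mult_right simp: algebra_simps)
  also have "\<dots> = integral {0..b} (\<lambda>x. b * (W x * f x) - x * W x * f x)"
    by (simp add: algebra_simps)
  also have "\<dots> = b * IW - IT"
    using int1 int2 by (subst integral_diff) (auto intro: integrable_on_mult_right simp: IW_def IT_def)
  finally have "e * (IW - K' * e) \<le> b * IW - IT" .
  moreover have "e * (IW - K' * e) > 0" using e0 eK pos by (simp add: IW_def)
  ultimately show ?thesis unfolding IW_def IT_def by linarith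
qed

lemma single_crossing_point:
  fixes P Q :: "real \<Rightarrow> real"
  assumes x: "0 \<le> x"
    and once: "\<And>u v. u \<in> {0..x} \<Longrightarrow> v \<in> {0..x} \<Longrightarrow> u < v \<Longrightarrow> P v < Q v \<Longrightarrow> P u \<le> Q u"
  obtains c where "c \<in> {0..x}"
    "\<And>u. u \<in> {0..x} \<Longrightarrow> u < c \<Longrightarrow> P u \<le> Q u"
    "\<And>u. u \<in> {0..x} \<Longrightarrow> c < u \<Longrightarrow> Q u \<le> P u"
proof
  define B where "B = {u \<in> {0..x}. P u < Q u}"
  define c where "c = Sup (insert 0 B)"
  have bdd: "bdd_above (insert 0 B)" using x by (auto simp: B_def intro!: bdd_aboveI[of _ x])
  show "c \<in> {0..x}" unfolding c_def using bdd x
    by (auto intro!: cSup_upper cSup_least simp: B_def)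
  show "P u \<le> Q u" if u: "u \<in> {0..x}" "u < c" for u
  proof -
    obtain v where "v \<in> insert 0 B" "u < v" using less_cSup_iff[OF _ bdd] u unfolding c_def by auto
    then show ?thesis using once[OF u(1)] u by (auto simp: B_def)
  qed
  show "Q u \<le> P u" if u: "u \<in> {0..x}" "c < u" for u
    using cSup_upper[OF _ bdd, of u] u unfolding c_def B_def by force
qed

lemma shifted_lower_cexp_has_integral:
  fixes f :: "real \<Rightarrow> real"
  assumes f_int: "f integrable_on {0..1}" and f_nn: "\<forall>x\<in>{0..1}. 0 \<le> f x"
    and x: "0 \<le> x" and k: "0 < k" "x + k \<le> 1"
    and Fx0: "integral {0..x} f \<noteq> 0" and Fy0: "integral {0..x + k} f \<noteq> 0"
  shows "((\<lambda>u. (u - c) * (f (k + u) / integral {0..x + k} f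
                 - (if u \<in> {0..x} then f u else 0) / integral {0..x} f))
          has_integral (cexp f 0 (x + k) - k - cexp f 0 x)) {-k..x}"
proof -
  define Fx Tx Fy Ty where "Fx = integral {0..x} f" and "Tx = integral {0..x} (\<lambda>t. t * f t)"
    and "Fy = integral {0..x + k} f" and "Ty = integral {0..x + k} (\<lambda>t. t * f t)"
  have Fx: "Fx \<noteq> 0" and Fy: "Fy \<noteq> 0" using Fx0 Fy0 by (simp_all add: Fx_def Fy_def)
  have fint: "f integrable_on {0..b}" if "b \<le> 1" for b
    using integrable_on_subinterval[OF f_int] that by auto
  have tfint: "(\<lambda>t. t * f t) integrable_on {0..b}" if "b \<le> 1" for b
    using bounded_measurable_mult_integrable[OF f_int f_nn, of 0 b "\<lambda>t. t" 1] that by auto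
  have shift: "((\<lambda>u. g (k + u)) has_integral integral {0..x + k} g) {-k..x}"
    if "g integrable_on {0..x + k}" for g :: "real \<Rightarrow> real"
    using has_integral_shift_Icc_real[of g k "integral {0..x + k} g" "-k" x] integrable_integral[OF that]
    by (simp add: o_def add.commute)
  have sub: "{0..x} \<subseteq> {-k..x}" using k by auto
  have H: "((\<lambda>u. ((k + u) * f (k + u) - k * f (k + u)) / Fy
              - (if u \<in> {0..x} then u * f u else 0) / Fx
              - c * (f (k + u) / Fy) + c * ((if u \<in> {0..x} then f u else 0) / Fx))
        has_integral ((Ty - k * Fy) / Fy - Tx / Fx - c * (Fy / Fy) + c * (Fx / Fx))) {-k..x}"
    unfolding Fx_def Tx_def Fy_def Ty_def
    using fint tfint x k
    by (intro has_integral_add has_integral_diff has_integral_divide has_integral_mult_right shift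
        iffD2[OF has_integral_restrict[OF sub]] integrable_integral) auto
  have E: "(Ty - k * Fy) / Fy - Tx / Fx - c * (Fy / Fy) + c * (Fx / Fx)
      = cexp f 0 (x + k) - k - cexp f 0 x"
    using Fx Fy by (simp add: Fx_def Fy_def Tx_def Ty_def cexp_def field_simps)
  have alg: "((k + u) * A - k * A) / Fy - (if p then u * B else 0) / Fx - c * (A / Fy)
      + c * ((if p then B else 0) / Fx) = (u - c) * (A / Fy - (if p then B else 0) / Fx)"
    for p and u A B :: real
    by (cases p) (simp_all add: diff_divide_distrib algebra_simps)
  show ?thesis unfolding Fx_def[symmetric] Fy_def[symmetric]
    by (rule has_integral_eq[OF _ H[unfolded E]], rule alg)
qed

lemma cexp_lower_increment_lt:
  fixes f :: "real \<Rightarrow> real"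
  assumes f_int: "f integrable_on {0..1}" and f_pos: "\<forall>x\<in>{0..1}. f x > 0"
    and f_lc: "strictly_log_concave_on {0..1} f"
    and xy: "0 < x" "x < y" "y \<le> 1"
  shows "cexp f 0 y - cexp f 0 x < y - x"
proof -
  obtain m K where m0: "0 < m" and mK: "\<forall>x\<in>{0..1}. m \<le> f x \<and> f x \<le> K"
    using strictly_log_concave_on_bounds[OF f_pos f_lc] .
  have f_nn: "\<forall>x\<in>{0..1}. 0 \<le> f x" using f_pos by (auto intro: less_imp_le)
  define k where "k = y - x"
  have k0: "k > 0" and y: "y = x + k" using xy by (auto simp: k_def)
  have mass: "m * b \<le> integral {0..b} f" if "0 \<le> b" "b \<le> 1" for b
    using integral_le[of "\<lambda>t. m" "{0..b}" f] integrable_on_subinterval[OF f_int] mK that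
    by (auto simp: mult.commute)
  define Fx Fy where "Fx = integral {0..x} f" and "Fy = integral {0..y} f"
  have Fx0: "Fx > 0" and Fy0: "Fy > 0"
    using mass[of x] mass[of y] xy m0 unfolding Fx_def Fy_def by (smt (verit) mult_pos_pos)+
  \<comment> \<open>Q is the density of the types in [0,y] shifted left by k, P that of the types in [0,x];
     their means differ by the integral of (u - c) (Q u - P u) for any c, and choosing c where
     Q - P changes sign leaves only the negative contribution of the mass Q puts on [-k,0)\<close>
  define Q where "Q = (\<lambda>u. f (k + u) / Fy)"
  define P where "P = (\<lambda>u. (if u \<in> {0..x} then f u else 0) / Fx)"
  \<comment> \<open>log-concavity makes Q/P decreasing on [0,x]\<close>
  have once: "P u \<le> Q u" if u: "u \<in> {0..x}" "v \<in> {0..x}" "u < v" "P v < Q v" for u v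
  proof -
    have ratio: "f (k + v) * f u \<le> f (k + u) * f v"
      using strictly_log_concave_on_shift_ratio[OF f_pos f_lc k0] u xy by (auto simp: k_def)
    have "f v * Fy < f (k + v) * Fx" using u Fx0 Fy0 by (simp add: Q_def P_def field_simps)
    moreover have "f u > 0" "f v > 0" using f_pos u xy by auto
    ultimately have "f v * (Fy * f u) < Fx * (f (k + v) * f u)"
      by (metis mult.assoc mult.commute mult_strict_right_mono)
    also have "\<dots> \<le> f v * (f (k + u) * Fx)"
      using mult_left_mono[OF ratio, of Fx] Fx0 by (simp add: ac_simps)
    finally have "f v * (Fy * f u) < f v * (f (k + u) * Fx)" .
    then show ?thesis using u Fx0 Fy0 \<open>f v > 0\<close> by (simp add: Q_def P_def field_simps)
  qed
  have x0: "0 \<le> x" using xy by simp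
  obtain c where c: "c \<in> {0..x}" and below: "\<And>u. u \<in> {0..x} \<Longrightarrow> u < c \<Longrightarrow> P u \<le> Q u"
    and above: "\<And>u. u \<in> {0..x} \<Longrightarrow> c < u \<Longrightarrow> Q u \<le> P u"
    by (rule single_crossing_point[of x P Q]) (use x0 once in blast)+
  define z where "z = (\<lambda>u. if u \<in> {-k..-k/2} then -(k/2) * (m / Fy) else 0)"
  have bound: "(u - c) * (Q u - P u) \<le> z u" if u: "u \<in> {-k..x}" for u
  proof (cases "u < 0")
    case True
    have Qm: "m / Fy \<le> Q u" using mK u True Fy0 xy by (auto simp: Q_def k_def divide_right_mono)
    then have Q0: "0 \<le> Q u" using m0 Fy0 by (smt (verit) divide_pos_pos)
    have "(u - c) * (Q u - P u) = (u - c) * Q u" using True by (simp add: P_def)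
    also have "\<dots> \<le> u * Q u" using c Q0 by (simp add: mult_right_mono)
    also have "\<dots> \<le> z u"
    proof (cases "u \<le> -k/2")
      case True
      have "u * Q u \<le> (-k/2) * Q u" using True Q0 by (intro mult_right_mono) auto
      also have "\<dots> \<le> (-k/2) * (m / Fy)" using Qm k0 by (intro mult_left_mono_neg) auto
      finally show ?thesis using True u by (simp add: z_def)
    qed (use \<open>u < 0\<close> Q0 in \<open>auto simp: z_def mult_nonpos_nonneg\<close>)
    finally show ?thesis .
  next
    case False
    then have "u \<in> {0..x}" "z u = 0" using u k0 by (auto simp: z_def)
    then show ?thesis using below above
      by (cases u c rule: linorder_cases) (auto simp: mult_nonpos_nonneg mult_nonneg_nonpos)
  qed
  have "{-k..-k/2} \<inter> {-k..x} = {-k..-k/2}" using k0 xy by auto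
  then have zint: "(z has_integral (-(k/2) * (m / Fy) * (k/2))) {-k..x}"
    using has_integral_const_real[of "-(k/2) * (m / Fy)" "-k" "-k/2"] k0
    unfolding z_def has_integral_restrict_Int by (simp add: algebra_simps)
  have gap: "((\<lambda>u. (u - c) * (Q u - P u)) has_integral (cexp f 0 y - k - cexp f 0 x)) {-k..x}"
    using shifted_lower_cexp_has_integral[OF f_int f_nn _ k0, of x c] xy Fx0 Fy0
    unfolding Q_def P_def Fx_def Fy_def y by simp
  have "cexp f 0 y - k - cexp f 0 x \<le> -(k/2) * (m / Fy) * (k/2)"
    using gap zint bound by (rule has_integral_le)
  also have "\<dots> < 0" using k0 m0 Fy0 by (simp add: mult_pos_pos)
  finally show ?thesis by (simp add: k_def)
qed

section \<open>Buyers' profits\<close>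

lemma le_mult_of_forall_small_increment:
  fixes X Y q d :: real
  assumes "0 < d" "0 < Y" and le: "\<And>e. 0 < e \<Longrightarrow> e < d \<Longrightarrow> X \<le> (q + e) * Y"
  shows "X \<le> q * Y"
proof (rule ccontr)
  assume "\<not> X \<le> q * Y"
  define e where "e = min (d/2) ((X - q * Y) / (2 * Y))"
  have "0 < e" "e < d" using \<open>\<not> X \<le> q * Y\<close> assms(1,2) by (auto simp: e_def)
  moreover have "e * Y \<le> (X - q * Y) / 2"
    using \<open>0 < Y\<close> by (simp add: e_def min_def field_simps)
  ultimately show False using le[of e] \<open>\<not> X \<le> q * Y\<close> by (simp add: algebra_simps)
qed

lemma value_fn_eq:
  "value_fn I S pg p1 qg qn \<theta>
     = max (sale I S pg + max (sale I S qg) \<theta>) (max (sale I S p1) \<theta> + max (sale I S qn) \<theta>)"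
  unfolding value_fn_def plans_def plan_pay_def by (simp add: UNIV_bool max_def)

lemma sale_geD:
  assumes "q < \<theta>" "\<theta> \<le> sale I S q"
  shows "I \<le> q" "\<theta> - S \<le> q"
  using assms by (auto simp: sale_def split: if_splits)

lemma profit_integrable:
  fixes f W :: "real \<Rightarrow> real"
  assumes f_int: "f integrable_on {0..1}" and f_nn: "\<forall>x\<in>{0..1}. 0 \<le> f x"
    and W: "W \<in> borel_measurable borel" "\<forall>x\<in>{0..1}. \<bar>W x\<bar> \<le> 1"
  shows "(\<lambda>x. W x * f x * (x - q)) integrable_on {0..1}"
proof -
  have "\<bar>W x * (x - q)\<bar> \<le> 1 + \<bar>q\<bar>" if "x \<in> {0..1}" for x
  proof -
    have "\<bar>W x * (x - q)\<bar> = \<bar>W x\<bar> * \<bar>x - q\<bar>" by (simp add: abs_mult)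
    also have "\<dots> \<le> 1 * (1 + \<bar>q\<bar>)" using W that by (intro mult_mono) auto
    finally show ?thesis by simp
  qed
  moreover have "(\<lambda>x. W x * (x - q)) \<in> borel_measurable borel" using W by measurable
  ultimately have "(\<lambda>x. W x * (x - q) * f x) integrable_on {0..1}"
    by (intro bounded_measurable_mult_integrable[OF f_int f_nn order.refl, where B = "1 + \<bar>q\<bar>"]) auto
  then show ?thesis by (simp add: ac_simps)
qed

lemma profit_ge_of_pointwise_le:
  fixes f W g :: "real \<Rightarrow> real"
  assumes "f integrable_on {0..1}" "\<forall>x\<in>{0..1}. 0 \<le> f x"
    and "W \<in> borel_measurable borel" "\<forall>x\<in>{0..1}. \<bar>W x\<bar> \<le> 1"
    and "(g has_integral J) {0..1}" "\<And>\<theta>. \<theta> \<in> {0..1} \<Longrightarrow> g \<theta> \<le> W \<theta> * f \<theta> * (\<theta> - q)"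
  shows "J \<le> profit f W q"
  unfolding profit_def using assms(5) integrable_integral[OF profit_integrable[OF assms(1-4)]] assms(6)
  by (rule has_integral_le)

lemma profit_ge_of_pointwise_le_interval:
  fixes f W w :: "real \<Rightarrow> real"
  assumes f_int: "f integrable_on {0..1}" and f_ge: "\<forall>x\<in>{0..1}. m \<le> f x" and m: "0 \<le> m"
    and W: "W \<in> borel_measurable borel" "\<forall>x\<in>{0..1}. \<bar>W x\<bar> \<le> 1"
    and J: "((\<lambda>\<theta>. w \<theta> * f \<theta> * (\<theta> - q)) has_integral J) {0..1}"
    and le: "\<And>\<theta>. \<theta> \<in> {0..1} \<Longrightarrow> w \<theta> * f \<theta> * (\<theta> - q) \<le> W \<theta> * f \<theta> * (\<theta> - q)"
    and lu: "0 \<le> l" "l \<le> u" "u \<le> 1" "q \<le> l"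
    and on_lu: "\<And>\<theta>. \<theta> \<in> {l..u} \<Longrightarrow> W \<theta> = 1 \<and> w \<theta> = 0"
  shows "J + m * (l - q) * (u - l) \<le> profit f W q"
proof (rule profit_ge_of_pointwise_le[OF f_int _ W])
  show "\<forall>x\<in>{0..1}. 0 \<le> f x" using f_ge m by (auto intro: order_trans)
  have "{l..u} \<inter> {0..1} = {l..u}" using lu by auto
  then have "((\<lambda>\<theta>. if \<theta> \<in> {l..u} then m * (l - q) else 0) has_integral m * (l - q) * (u - l)) {0..1}"
    unfolding has_integral_restrict_Int using has_integral_const_real[of "m * (l - q)" l u] lu
    by (simp add: mult.commute)
  then show "((\<lambda>\<theta>. w \<theta> * f \<theta> * (\<theta> - q) + (if \<theta> \<in> {l..u} then m * (l - q) else 0))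
      has_integral J + m * (l - q) * (u - l)) {0..1}"
    by (rule has_integral_add[OF J])
  fix \<theta> :: real assume \<theta>: "\<theta> \<in> {0..1}"
  have "m \<le> f \<theta>" using f_ge \<theta> by blast
  show "w \<theta> * f \<theta> * (\<theta> - q) + (if \<theta> \<in> {l..u} then m * (l - q) else 0) \<le> W \<theta> * f \<theta> * (\<theta> - q)"
  proof (cases "\<theta> \<in> {l..u}")
    case True
    then have "m * (l - q) \<le> f \<theta> * (\<theta> - q)" using \<open>m \<le> f \<theta>\<close> m lu by (intro mult_mono) auto
    then show ?thesis using True on_lu by simp
  qed (use le[OF \<theta>] in auto)
qed

lemma truncated_profit_has_integral:
  fixes f w :: "real \<Rightarrow> real"
  assumes f_int: "f integrable_on {0..1}" and f_nn: "\<forall>x\<in>{0..1}. 0 \<le> f x"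
    and b: "0 \<le> b" "b \<le> 1" and w: "w \<in> borel_measurable borel" "\<forall>x\<in>{0..b}. \<bar>w x\<bar> \<le> 1"
  shows "((\<lambda>\<theta>. (if \<theta> \<le> b then w \<theta> else 0) * f \<theta> * (\<theta> - q)) has_integral
           integral {0..b} (\<lambda>\<theta>. \<theta> * w \<theta> * f \<theta>) - q * integral {0..b} (\<lambda>\<theta>. w \<theta> * f \<theta>)) {0..1}"
proof -
  have sub: "{0..b} \<subseteq> {0..1}" and inter: "{..b} \<inter> {0..1} = {0..b}" using b by auto
  have "(\<lambda>\<theta>. w \<theta> * f \<theta>) integrable_on {0..b}"
    using bounded_measurable_mult_integrable[OF f_int f_nn sub w] by blast
  moreover have "(\<lambda>\<theta>. \<theta> * w \<theta> * f \<theta>) integrable_on {0..b}"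
  proof -
    have "\<forall>x\<in>{0..b}. \<bar>x * w x\<bar> \<le> 1" using w b by (auto simp: abs_mult intro: mult_le_one)
    moreover have "(\<lambda>x. x * w x) \<in> borel_measurable borel" using w by measurable
    ultimately show ?thesis using bounded_measurable_mult_integrable[OF f_int f_nn sub] by blast
  qed
  ultimately have "((\<lambda>\<theta>. \<theta> * w \<theta> * f \<theta> - q * (w \<theta> * f \<theta>)) has_integral
      integral {0..b} (\<lambda>\<theta>. \<theta> * w \<theta> * f \<theta>) - q * integral {0..b} (\<lambda>\<theta>. w \<theta> * f \<theta>)) ({..b} \<inter> {0..1})"
    unfolding inter by (intro has_integral_diff has_integral_mult_right integrable_integral)
  then show ?thesis
    unfolding has_integral_restrict_Int[symmetric]
    by (rule has_integral_eq[rotated]) (auto simp: algebra_simps)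
qed

section \<open>Short-lived stimulation equilibria\<close>

(* Notation of the paper: th and thg are the cutoffs hat-theta and hat-theta_g = theta_2, p1 is
   the t = 1 market price, and qg, qn are the t = 2 prices offered to bailout recipients and to
   non-recipients. *)

locale transparent_short_lived =
  fixes I S pg :: real and f :: "real \<Rightarrow> real"
    and th thg p1 qg qn :: real and sig :: "real \<Rightarrow> real" and \<theta>0 :: real
  assumes S_pos: "0 < S"
    and f_pos: "\<forall>x\<in>{0..1}. f x > 0" and f_int: "f integrable_on {0..1}"
    and f_lc: "strictly_log_concave_on {0..1} f"
    and pg_ge_I: "I \<le> pg" and pg_lt: "pg + S < 1"
    and theta0: "0 < \<theta>0" "\<theta>0 - S = cexp f 0 \<theta>0" "\<theta>0 < pg + S"
    and eq: "transparent_eq I S pg f th thg thg sig p1 qg qn"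
begin

abbreviation V where "V \<equiv> value_fn I S pg p1 qg qn"

definition rec_seller :: "real \<Rightarrow> real" where
  "rec_seller \<theta> = (if \<theta> \<le> th then sig \<theta> else 0)"

definition mkt_seller :: "real \<Rightarrow> real" where
  "mkt_seller \<theta> = (if \<theta> \<le> th then 1 - sig \<theta> else 0)"

definition recipient :: "real \<Rightarrow> real" where
  "recipient \<theta> = (if \<theta> \<le> th then sig \<theta> else if \<theta> \<le> thg then 1 else 0)"

lemma f_nn: "\<forall>x\<in>{0..1}. 0 \<le> f x"
  using f_pos by (auto intro: less_imp_le)

lemma sale_pg: "sale I S pg = pg + S"
  using pg_ge_I by (simp add: sale_def)

lemma cutoffs: "0 < th" "th \<le> thg" "thg \<le> 1"
  using eq by (auto simp: transparent_eq_def Let_def)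

lemma th_le_1: "th \<le> 1"
  using cutoffs by simp

lemma sig_measurable: "sig \<in> borel_measurable borel"
  using eq by (auto simp: transparent_eq_def Let_def)

lemma sig_bounds: "\<forall>\<theta>\<in>{0..th}. 0 \<le> sig \<theta> \<and> sig \<theta> \<le> 1"
  using eq by (auto simp: transparent_eq_def Let_def)

lemma strat_weights:
  "strat th thg thg sig \<theta> (Gov, True) = rec_seller \<theta>"
  "strat th thg thg sig \<theta> (Mkt, True) + strat th thg thg sig \<theta> (Mkt, False) = mkt_seller \<theta>"
  "strat th thg thg sig \<theta> (Mkt, True) + strat th thg thg sig \<theta> (NoSale, True) = mkt_seller \<theta>"
  "strat th thg thg sig \<theta> (Gov, True) + strat th thg thg sig \<theta> (Gov, False) = recipient \<theta>"
  using cutoffs by (auto simp: strat_def rec_seller_def mkt_seller_def recipient_def)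

lemma buyer_conditions:
  shows mkt_break_even: "0 \<le> profit f mkt_seller p1"
    and mkt_deviation:
      "profit f (\<lambda>\<theta>. indicator {\<theta>. V \<theta> < sale I S p' + max (sale I S qn) \<theta>} \<theta>) p' \<le> 0"
    and rec_break_even: "0 \<le> profit f rec_seller qg"
    and rec_deviation:
      "profit f (\<lambda>\<theta>. recipient \<theta> * indicator {\<theta>. max (sale I S qg) \<theta> < sale I S q'} \<theta>) q' \<le> 0"
    and non_break_even: "0 \<le> profit f mkt_seller qn"
    and non_deviation:
      "profit f (\<lambda>\<theta>. (1 - recipient \<theta>) * indicator {\<theta>. max (sale I S qn) \<theta> < sale I S q'} \<theta>) q' \<le> 0"
  using eq[unfolded transparent_eq_def Let_def, unfolded strat_weights(4), unfolded strat_weights(1-3)]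
  by blast+

lemma plan_optimal:
  "\<theta> \<in> {0..1} \<Longrightarrow> 0 < strat th thg thg sig \<theta> pl \<Longrightarrow> plan_pay I S pg p1 qg qn \<theta> pl = V \<theta>"
  using eq unfolding transparent_eq_def Let_def by blast

lemma value_ge:
  "sale I S pg + max (sale I S qg) \<theta> \<le> V \<theta>" "max (sale I S p1) \<theta> + max (sale I S qn) \<theta> \<le> V \<theta>"
  by (simp_all add: value_fn_eq)

lemma value_gov: "\<theta> \<in> {0..1} \<Longrightarrow> \<theta> \<le> th \<Longrightarrow> 0 < sig \<theta> \<Longrightarrow> V \<theta> = sale I S pg + sale I S qg"
  using plan_optimal[of \<theta> "(Gov, True)"] by (simp add: strat_def plan_pay_def)

lemma value_mkt: "\<theta> \<in> {0..1} \<Longrightarrow> \<theta> \<le> th \<Longrightarrow> sig \<theta> < 1 \<Longrightarrow> V \<theta> = sale I S p1 + sale I S qn"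
  using plan_optimal[of \<theta> "(Mkt, True)"] by (simp add: strat_def plan_pay_def)

lemma value_gov_only: "\<theta> \<in> {0..1} \<Longrightarrow> th < \<theta> \<Longrightarrow> \<theta> \<le> thg \<Longrightarrow> V \<theta> = sale I S pg + \<theta>"
  using plan_optimal[of \<theta> "(Gov, False)"] by (simp add: strat_def plan_pay_def)

lemma value_no_sale: "\<theta> \<in> {0..1} \<Longrightarrow> thg < \<theta> \<Longrightarrow> V \<theta> = \<theta> + \<theta>"
  using plan_optimal[of \<theta> "(NoSale, False)"] cutoffs by (simp add: strat_def plan_pay_def)

definition mass_gov :: real where "mass_gov = integral {0..th} (\<lambda>\<theta>. sig \<theta> * f \<theta>)"
definition mass_mkt :: real where "mass_mkt = integral {0..th} (\<lambda>\<theta>. (1 - sig \<theta>) * f \<theta>)"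
definition total_gov :: real where "total_gov = integral {0..th} (\<lambda>\<theta>. \<theta> * sig \<theta> * f \<theta>)"
definition total_mkt :: real where "total_mkt = integral {0..th} (\<lambda>\<theta>. \<theta> * (1 - sig \<theta>) * f \<theta>)"

lemma weights_measurable:
  "(\<lambda>\<theta>. 1 - sig \<theta>) \<in> borel_measurable borel" "recipient \<in> borel_measurable borel"
  using sig_measurable unfolding recipient_def by measurable

lemma weights_bounded:
  "\<theta> \<in> {0..th} \<Longrightarrow> \<bar>sig \<theta>\<bar> \<le> 1" "\<theta> \<in> {0..th} \<Longrightarrow> \<bar>1 - sig \<theta>\<bar> \<le> 1"
  "\<theta> \<in> {0..1} \<Longrightarrow> 0 \<le> recipient \<theta> \<and> recipient \<theta> \<le> 1"
  using sig_bounds by (auto simp: recipient_def)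

lemma rec_seller_has_integral:
  "((\<lambda>\<theta>. rec_seller \<theta> * f \<theta> * (\<theta> - q)) has_integral total_gov - q * mass_gov) {0..1}"
  using truncated_profit_has_integral[OF f_int f_nn _ _ sig_measurable, of th] cutoffs weights_bounded(1)
  by (auto simp: rec_seller_def total_gov_def mass_gov_def)

lemma mkt_seller_has_integral:
  "((\<lambda>\<theta>. mkt_seller \<theta> * f \<theta> * (\<theta> - q)) has_integral total_mkt - q * mass_mkt) {0..1}"
  using truncated_profit_has_integral[OF f_int f_nn _ _ weights_measurable(1), of th] cutoffs
    weights_bounded(2)
  by (auto simp: mkt_seller_def total_mkt_def mass_mkt_def)

lemma profit_rec_seller: "profit f rec_seller q = total_gov - q * mass_gov"
  unfolding profit_def using rec_seller_has_integral by (rule integral_unique)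

lemma profit_mkt_seller: "profit f mkt_seller q = total_mkt - q * mass_mkt"
  unfolding profit_def using mkt_seller_has_integral by (rule integral_unique)

lemma f_bounded_below: obtains m where "0 < m" "\<forall>x\<in>{0..1}. m \<le> f x"
proof -
  obtain m K where "0 < m" "\<forall>x\<in>{0..1}. m \<le> f x \<and> f x \<le> K"
    by (rule strictly_log_concave_on_bounds[OF f_pos f_lc])
  then show ?thesis using that[of m] by simp
qed

lemma f_bounded_above: obtains K where "\<forall>x\<in>{0..1}. f x \<le> K"
proof -
  obtain m K where "0 < m" "\<forall>x\<in>{0..1}. m \<le> f x \<and> f x \<le> K"
    by (rule strictly_log_concave_on_bounds[OF f_pos f_lc])
  then show ?thesis using that[of K] by simp
qed

lemma low_types_integrable:
  "(\<lambda>\<theta>. sig \<theta> * f \<theta>) integrable_on {0..th}" "(\<lambda>\<theta>. (1 - sig \<theta>) * f \<theta>) integrable_on {0..th}"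
  "(\<lambda>\<theta>. \<theta> * sig \<theta> * f \<theta>) integrable_on {0..th}"
  "(\<lambda>\<theta>. \<theta> * (1 - sig \<theta>) * f \<theta>) integrable_on {0..th}"
proof -
  have sub: "{0..th} \<subseteq> {0..1}" using cutoffs by auto
  note int = bounded_measurable_mult_integrable[OF f_int f_nn sub, where B = 1]
  have "\<forall>\<theta>\<in>{0..th}. \<bar>\<theta> * sig \<theta>\<bar> \<le> 1" "\<forall>\<theta>\<in>{0..th}. \<bar>\<theta> * (1 - sig \<theta>)\<bar> \<le> 1"
    using sig_bounds cutoffs by (auto simp: abs_mult intro!: mult_le_one)
  moreover have "(\<lambda>\<theta>. \<theta> * sig \<theta>) \<in> borel_measurable borel"
    "(\<lambda>\<theta>. \<theta> * (1 - sig \<theta>)) \<in> borel_measurable borel"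
    using sig_measurable by measurable
  ultimately show "(\<lambda>\<theta>. \<theta> * sig \<theta> * f \<theta>) integrable_on {0..th}"
    "(\<lambda>\<theta>. \<theta> * (1 - sig \<theta>) * f \<theta>) integrable_on {0..th}"
    using int[of "\<lambda>\<theta>. \<theta> * sig \<theta>"] int[of "\<lambda>\<theta>. \<theta> * (1 - sig \<theta>)"] by simp_all
  show "(\<lambda>\<theta>. sig \<theta> * f \<theta>) integrable_on {0..th}"
    "(\<lambda>\<theta>. (1 - sig \<theta>) * f \<theta>) integrable_on {0..th}"
    using int[OF sig_measurable] int[OF weights_measurable(1)] weights_bounded(1,2) by blast+
qed

lemma low_types_nonneg: "0 \<le> mass_gov" "0 \<le> mass_mkt" "0 \<le> total_gov" "0 \<le> total_mkt"
  unfolding mass_gov_def mass_mkt_def total_gov_def total_mkt_def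
  using sig_bounds f_nn cutoffs
  by (intro integral_nonneg low_types_integrable; force)+

lemma mass_low_types_pos: "0 < mass_gov + mass_mkt"
proof -
  obtain m where m: "0 < m" "\<forall>x\<in>{0..1}. m \<le> f x" by (rule f_bounded_below)
  have "mass_gov + mass_mkt = integral {0..th} f"
    unfolding mass_gov_def mass_mkt_def integral_add[OF low_types_integrable(1,2), symmetric]
    by (simp add: algebra_simps)
  also have "integral {0..th} (\<lambda>\<theta>. m) \<le> \<dots>"
    using integrable_on_subinterval[OF f_int] m cutoffs by (intro integral_le) auto
  moreover have "0 < th * m" using m cutoffs by simp
  ultimately show ?thesis using cutoffs by (simp add: mult.commute)
qed

lemma cexp_th: "cexp f 0 th = (total_gov + total_mkt) / (mass_gov + mass_mkt)"
  unfolding cexp_def mass_gov_def mass_mkt_def total_gov_def total_mkt_def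
    integral_add[OF low_types_integrable(1,2), symmetric]
    integral_add[OF low_types_integrable(3,4), symmetric]
  by (simp add: algebra_simps)

lemma total_gov_lt:
  assumes "0 < mass_gov" shows "total_gov < th * mass_gov"
proof -
  obtain K where K: "\<forall>x\<in>{0..1}. f x \<le> K" by (rule f_bounded_above)
  show ?thesis using assms unfolding mass_gov_def total_gov_def
    by (rule integral_mult_id_lt_right_endpoint[OF f_int f_nn K cutoffs(1) th_le_1 sig_measurable
          sig_bounds])
qed

lemma total_mkt_lt:
  assumes "0 < mass_mkt" shows "total_mkt < th * mass_mkt"
proof -
  obtain K where K: "\<forall>x\<in>{0..1}. f x \<le> K" by (rule f_bounded_above)
  have W01: "\<forall>x\<in>{0..th}. 0 \<le> 1 - sig x \<and> 1 - sig x \<le> 1" using sig_bounds by auto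
  show ?thesis using assms unfolding mass_mkt_def total_mkt_def
    by (rule integral_mult_id_lt_right_endpoint[OF f_int f_nn K cutoffs(1) th_le_1
          weights_measurable(1) W01])
qed

lemma gov_seller_exists:
  assumes "0 < mass_gov" obtains \<theta> where "\<theta> \<in> {0..th}" "0 < sig \<theta>"
proof (rule ccontr)
  assume "\<not> thesis"
  then have "\<forall>\<theta>\<in>{0..th}. sig \<theta> = 0" using that sig_bounds by force
  then have "mass_gov = integral {0..th} (\<lambda>\<theta>. 0)" unfolding mass_gov_def by (intro integral_cong) auto
  with assms show False by simp
qed

lemma mkt_seller_exists:
  assumes "0 < mass_mkt" obtains \<theta> where "\<theta> \<in> {0..th}" "sig \<theta> < 1"
proof (rule ccontr)
  assume "\<not> thesis"
  then have "\<forall>\<theta>\<in>{0..th}. 1 - sig \<theta> = 0" using that sig_bounds by force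
  then have "mass_mkt = integral {0..th} (\<lambda>\<theta>. 0)" unfolding mass_mkt_def by (intro integral_cong) auto
  with assms show False by simp
qed

text \<open>Low types are indifferent between the government and the market path at t = 1, so
  once some low type takes one path, every low type earns exactly that path's payoff.\<close>

lemma value_low_types_gov:
  assumes "0 < mass_gov" "\<theta> \<in> {0..th}"
  shows "V \<theta> = sale I S pg + sale I S qg"
proof -
  obtain \<theta>1 where \<theta>1: "\<theta>1 \<in> {0..th}" "0 < sig \<theta>1" using gov_seller_exists[OF assms(1)] .
  have "V \<theta>1 = sale I S pg + sale I S qg" using value_gov \<theta>1 th_le_1 by auto
  then have "sale I S p1 + sale I S qn \<le> sale I S pg + sale I S qg" using value_ge(2)[of \<theta>1] by simp
  moreover have "sale I S pg + sale I S qg \<le> V \<theta>" using value_ge(1)[of \<theta>] by simp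
  moreover have "V \<theta> = sale I S pg + sale I S qg \<or> V \<theta> = sale I S p1 + sale I S qn"
    using value_gov[of \<theta>] value_mkt[of \<theta>] assms(2) th_le_1 by (cases "0 < sig \<theta>") auto
  ultimately show ?thesis by linarith
qed

lemma value_low_types_mkt:
  assumes "0 < mass_mkt" "\<theta> \<in> {0..th}"
  shows "V \<theta> = sale I S p1 + sale I S qn"
proof -
  obtain \<theta>1 where \<theta>1: "\<theta>1 \<in> {0..th}" "sig \<theta>1 < 1" using mkt_seller_exists[OF assms(1)] .
  have "V \<theta>1 = sale I S p1 + sale I S qn" using value_mkt \<theta>1 th_le_1 by auto
  then have "sale I S pg + sale I S qg \<le> sale I S p1 + sale I S qn" using value_ge(1)[of \<theta>1] by simp
  moreover have "sale I S p1 + sale I S qn \<le> V \<theta>" using value_ge(2)[of \<theta>] by simp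
  moreover have "V \<theta> = sale I S pg + sale I S qg \<or> V \<theta> = sale I S p1 + sale I S qn"
    using value_gov[of \<theta>] value_mkt[of \<theta>] assms(2) th_le_1 by (cases "0 < sig \<theta>") auto
  ultimately show ?thesis by linarith
qed

lemma rec_sale_ge_th: "0 < mass_gov \<Longrightarrow> th \<le> sale I S qg"
  using value_low_types_gov[of th] value_ge(1)[of th] cutoffs by simp

lemma non_sale_ge_th: "0 < mass_mkt \<Longrightarrow> th \<le> sale I S qn"
  using value_low_types_mkt[of th] value_ge(2)[of th] cutoffs by simp

lemma qg_lt_th:
  assumes "0 < mass_gov" shows "qg < th"
proof -
  have "qg * mass_gov < th * mass_gov"
    using rec_break_even total_gov_lt[OF assms] unfolding profit_rec_seller by simp
  then show ?thesis using assms by simp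
qed

lemma qn_lt_th:
  assumes "0 < mass_mkt" shows "qn < th"
proof -
  have "qn * mass_mkt < th * mass_mkt"
    using non_break_even total_mkt_lt[OF assms] unfolding profit_mkt_seller by simp
  then show ?thesis using assms by simp
qed

lemma total_gov_ge: "(th - S) * mass_gov \<le> total_gov"
proof (cases "0 < mass_gov")
  case True
  then have "th - S \<le> qg" using sale_geD(2)[OF qg_lt_th rec_sale_ge_th] by simp
  then have "(th - S) * mass_gov \<le> qg * mass_gov" using True by simp
  also have "\<dots> \<le> total_gov" using rec_break_even unfolding profit_rec_seller by simp
  finally show ?thesis .
qed (use low_types_nonneg in auto)

lemma total_mkt_ge: "(th - S) * mass_mkt \<le> total_mkt"
proof (cases "0 < mass_mkt")
  case True
  then have "th - S \<le> qn" using sale_geD(2)[OF qn_lt_th non_sale_ge_th] by simp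
  then have "(th - S) * mass_mkt \<le> qn * mass_mkt" using True by simp
  also have "\<dots> \<le> total_mkt" using non_break_even unfolding profit_mkt_seller by simp
  finally show ?thesis .
qed (use low_types_nonneg in auto)

lemma cexp_th_ge: "th - S \<le> cexp f 0 th"
  using total_gov_ge total_mkt_ge mass_low_types_pos unfolding cexp_th
  by (simp add: field_simps)

lemma cexp_lt_above_theta0: "\<theta>0 < x \<Longrightarrow> x \<le> 1 \<Longrightarrow> cexp f 0 x < x - S"
  using cexp_lower_increment_lt[OF f_int f_pos f_lc theta0(1)] theta0(2) by force

lemma below_theta0: "0 < x \<Longrightarrow> x \<le> 1 \<Longrightarrow> x - S < cexp f 0 x \<Longrightarrow> x < \<theta>0"
  using cexp_lower_increment_lt[OF f_int f_pos f_lc, of x \<theta>0] cexp_lt_above_theta0[of x] theta0 pg_lt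
  by (cases x \<theta>0 rule: linorder_cases) auto

lemma th_lt_thg: "th < thg"
proof (rule ccontr)
  assume "\<not> th < thg"
  then have thg: "thg = th" using cutoffs by simp
  have "pg + S \<le> th"
  proof (rule ccontr)
    assume "\<not> pg + S \<le> th"
    define \<theta> where "\<theta> = (th + (pg + S)) / 2"
    have "\<theta> \<in> {0..1}" "thg < \<theta>" "\<theta> < pg + S" using \<open>\<not> pg + S \<le> th\<close> cutoffs pg_lt thg
      by (auto simp: \<theta>_def)
    then show False using value_no_sale[of \<theta>] value_ge(1)[of \<theta>] sale_pg by auto
  qed
  then have "cexp f 0 th < th - S" using cexp_lt_above_theta0 theta0(3) th_le_1 by simp
  then show False using cexp_th_ge by simp
qed

lemma thg_lt_1: "thg < 1"
proof (rule ccontr)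
  assume "\<not> thg < 1"
  then have "thg = 1" using cutoffs by simp
  then have "pg + S + 1 = V 1" using value_gov_only[of 1] th_lt_thg sale_pg by simp
  then show False using value_ge(2)[of 1] pg_lt by simp
qed

lemma thg_eq: "thg = pg + S"
proof -
  have "pg + S + thg = V thg" using value_gov_only[of thg] th_lt_thg cutoffs sale_pg by simp
  then have "thg \<le> pg + S" using value_ge(2)[of thg] by simp
  moreover have "\<not> thg < pg + S"
  proof
    assume "thg < pg + S"
    define \<theta> where "\<theta> = (thg + (pg + S)) / 2"
    have "\<theta> \<in> {0..1}" "thg < \<theta>" "\<theta> < pg + S" using \<open>thg < pg + S\<close> cutoffs pg_lt
      by (auto simp: \<theta>_def)
    then show False using value_no_sale[of \<theta>] value_ge(1)[of \<theta>] sale_pg by auto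
  qed
  ultimately show ?thesis by simp
qed

lemma rec_sale_le_th: "sale I S qg \<le> th"
proof (rule ccontr)
  assume "\<not> sale I S qg \<le> th"
  define \<theta> where "\<theta> = (th + min (sale I S qg) thg) / 2"
  have "\<theta> \<in> {0..1}" "th < \<theta>" "\<theta> \<le> thg" "\<theta> < sale I S qg"
    using \<open>\<not> sale I S qg \<le> th\<close> cutoffs th_lt_thg by (auto simp: \<theta>_def)
  then show False using value_gov_only[of \<theta>] value_ge(1)[of \<theta>] by auto
qed

lemma mkt_path_le: "sale I S p1 + sale I S qn \<le> pg + S + th"
proof (rule ccontr)
  assume gt: "\<not> sale I S p1 + sale I S qn \<le> pg + S + th"
  define d where "d = min (sale I S p1 + sale I S qn - (pg + S) - th) (thg - th)"
  have d: "0 < d" "d \<le> sale I S p1 + sale I S qn - (pg + S) - th" "d \<le> thg - th"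
    using gt th_lt_thg by (auto simp: d_def)
  define \<theta> where "\<theta> = th + d / 2"
  have "\<theta> \<in> {0..1}" "th < \<theta>" "\<theta> \<le> thg" "pg + S + \<theta> < sale I S p1 + sale I S qn"
    using d cutoffs unfolding \<theta>_def by auto
  then show False using value_gov_only[of \<theta>] value_ge(2)[of \<theta>] sale_pg by auto
qed

lemma non_sale_le: "sale I S qn \<le> pg + S"
  using value_gov_only[of thg] value_ge(2)[of thg] th_lt_thg cutoffs sale_pg by simp

text \<open>If no low type sold to the government, a buyer of recipients' units at a price just
  below th would buy from the recipients just above th and make a profit.\<close>

lemma mass_gov_pos: "0 < mass_gov"
proof (rule ccontr)
  assume "\<not> 0 < mass_gov"
  then have G0: "mass_gov = 0" using low_types_nonneg by simp
  then have M: "0 < mass_mkt" using mass_low_types_pos by simp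
  have "I \<le> qn" using sale_geD(1)[OF qn_lt_th[OF M] non_sale_ge_th[OF M]] .
  obtain m where m: "0 < m" "\<forall>x\<in>{0..1}. m \<le> f x" by (rule f_bounded_below)
  define q where "q = max I (th - S/2)"
  have q: "q < th" "th < q + S" and sale_q: "sale I S q = q + S"
    using \<open>I \<le> qn\<close> qn_lt_th[OF M] S_pos by (auto simp: q_def sale_def)
  define d where "d = min (thg - th) (q + S - th)"
  have d: "0 < d" "th + d \<le> thg" "th + d \<le> q + S" using th_lt_thg q by (auto simp: d_def)
  define W where "W = (\<lambda>\<theta>. recipient \<theta> * indicator {\<theta>. max (sale I S qg) \<theta> < sale I S q} \<theta>)"
  have Wm: "W \<in> borel_measurable borel" unfolding W_def
    by (intro borel_measurable_times weights_measurable borel_measurable_indicator borel_open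
        open_Collect_less continuous_intros)
  have W1: "\<forall>x\<in>{0..1}. \<bar>W x\<bar> \<le> 1" using weights_bounded(3) by (auto simp: W_def indicator_def)
  define gain where "gain = m * (th + d/3 - q) * (th + d/2 - (th + d/3))"
  have "total_gov - q * mass_gov + gain \<le> profit f W q"
    unfolding gain_def
  proof (rule profit_ge_of_pointwise_le_interval[OF f_int m(2) _ Wm W1 rec_seller_has_integral])
    fix \<theta> :: real assume \<theta>: "\<theta> \<in> {0..1}"
    show "rec_seller \<theta> * f \<theta> * (\<theta> - q) \<le> W \<theta> * f \<theta> * (\<theta> - q)"
    proof (cases "\<theta> \<le> th")
      case True
      then show ?thesis using rec_sale_le_th q sale_q by (simp add: W_def rec_seller_def recipient_def)
    next
      case False
      then show ?thesis using \<theta> q f_nn weights_bounded(3)[OF \<theta>]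
        by (auto simp: W_def rec_seller_def indicator_def)
    qed
  next
    fix \<theta> :: real assume "\<theta> \<in> {th + d/3..th + d/2}"
    then show "W \<theta> = 1 \<and> rec_seller \<theta> = 0"
      using d rec_sale_le_th sale_q by (auto simp: W_def rec_seller_def recipient_def)
  qed (use m d q cutoffs in auto)
  moreover have "0 < gain" using m d q by (simp add: gain_def)
  moreover have "profit f W q \<le> 0" unfolding W_def by (rule rec_deviation)
  ultimately show False using G0 low_types_nonneg by simp
qed

text \<open>Symmetrically, if no low type sold to the market, a buyer of non-recipients' units at a
  price just above thg would buy from the types just above thg and make a profit.\<close>

lemma mass_mkt_pos: "0 < mass_mkt"
proof (rule ccontr)
  assume "\<not> 0 < mass_mkt"
  then have M0: "mass_mkt = 0" using low_types_nonneg by simp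
  obtain m where m: "0 < m" "\<forall>x\<in>{0..1}. m \<le> f x" by (rule f_bounded_below)
  define q where "q = thg - S/2"
  have sale_q: "sale I S q = thg + S/2" using thg_eq pg_ge_I S_pos by (simp add: q_def sale_def)
  have non_sale_le_thg: "sale I S qn \<le> thg" using non_sale_le thg_eq by simp
  define d where "d = min (1 - thg) (S/2)"
  have d: "0 < d" "thg + d \<le> 1" "d \<le> S/2" using thg_lt_1 S_pos by (auto simp: d_def min_def)
  define W where "W = (\<lambda>\<theta>. (1 - recipient \<theta>) * indicator {\<theta>. max (sale I S qn) \<theta> < sale I S q} \<theta>)"
  have Wm: "W \<in> borel_measurable borel" unfolding W_def
    by (intro borel_measurable_times borel_measurable_diff weights_measurable borel_measurable_indicator
        borel_open open_Collect_less continuous_intros) auto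
  have W1: "\<forall>x\<in>{0..1}. \<bar>W x\<bar> \<le> 1" using weights_bounded(3) by (auto simp: W_def indicator_def)
  define gain where "gain = m * (thg + d/3 - q) * (thg + d/2 - (thg + d/3))"
  have "total_mkt - q * mass_mkt + gain \<le> profit f W q"
    unfolding gain_def
  proof (rule profit_ge_of_pointwise_le_interval[OF f_int m(2) _ Wm W1 mkt_seller_has_integral])
    fix \<theta> :: real assume \<theta>: "\<theta> \<in> {0..1}"
    show "mkt_seller \<theta> * f \<theta> * (\<theta> - q) \<le> W \<theta> * f \<theta> * (\<theta> - q)"
    proof (cases "\<theta> \<le> thg")
      case True
      then show ?thesis using non_sale_le_thg th_lt_thg sale_q S_pos
        by (auto simp: W_def mkt_seller_def recipient_def)
    next
      case False
      then show ?thesis using \<theta> S_pos f_nn th_lt_thg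
        by (auto simp: W_def mkt_seller_def recipient_def indicator_def q_def)
    qed
  next
    fix \<theta> :: real assume "\<theta> \<in> {thg + d/3..thg + d/2}"
    then show "W \<theta> = 1 \<and> mkt_seller \<theta> = 0"
      using d non_sale_le_thg th_lt_thg sale_q by (auto simp: W_def mkt_seller_def recipient_def)
  qed (use m d S_pos cutoffs in \<open>auto simp: q_def\<close>)
  moreover have "0 < gain" using m d S_pos by (simp add: gain_def q_def)
  moreover have "profit f W q \<le> 0" unfolding W_def by (rule non_deviation)
  ultimately show False using M0 low_types_nonneg by simp
qed

lemma rec_sale_eq: "sale I S qg = th"
  using rec_sale_ge_th[OF mass_gov_pos] rec_sale_le_th by simp

lemma qg_eq: "qg = th - S" and I_le_qg: "I \<le> qg"
  using sale_geD[OF qg_lt_th[OF mass_gov_pos], of I S] rec_sale_eq by (auto simp: sale_def)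

lemma value_low_types: "\<theta> \<in> {0..th} \<Longrightarrow> V \<theta> = pg + S + th"
  using value_low_types_gov[OF mass_gov_pos] rec_sale_eq sale_pg by simp

text \<open>A recipients' buyer offering slightly more than th - S would attract all low
  recipients and only higher types, so competition pins the recipients' price to their
  average value.\<close>

lemma total_gov_eq: "total_gov = (th - S) * mass_gov"
proof (rule antisym[OF le_mult_of_forall_small_increment[OF S_pos mass_gov_pos] total_gov_ge])
  fix e :: real assume e: "0 < e" "e < S"
  define q where "q = th - S + e"
  have sale_q: "sale I S q = th + e" using I_le_qg qg_eq e by (simp add: q_def sale_def)
  define W where "W = (\<lambda>\<theta>. recipient \<theta> * indicator {\<theta>. max (sale I S qg) \<theta> < sale I S q} \<theta>)"
  have Wm: "W \<in> borel_measurable borel" unfolding W_def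
    by (intro borel_measurable_times weights_measurable borel_measurable_indicator borel_open
        open_Collect_less continuous_intros)
  have W1: "\<forall>x\<in>{0..1}. \<bar>W x\<bar> \<le> 1" using weights_bounded(3) by (auto simp: W_def indicator_def)
  have "total_gov - q * mass_gov \<le> profit f W q"
  proof (rule profit_ge_of_pointwise_le[OF f_int f_nn Wm W1 rec_seller_has_integral])
    fix \<theta> :: real assume \<theta>: "\<theta> \<in> {0..1}"
    show "rec_seller \<theta> * f \<theta> * (\<theta> - q) \<le> W \<theta> * f \<theta> * (\<theta> - q)"
    proof (cases "\<theta> \<le> th")
      case True
      then show ?thesis using rec_sale_eq sale_q e by (simp add: W_def rec_seller_def recipient_def)
    next
      case False
      then show ?thesis using \<theta> e f_nn weights_bounded(3)[OF \<theta>]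
        by (auto simp: W_def rec_seller_def indicator_def q_def)
    qed
  qed
  moreover have "profit f W q \<le> 0" unfolding W_def by (rule rec_deviation)
  ultimately show "total_gov \<le> (th - S + e) * mass_gov" by (simp add: q_def)
qed

lemma mkt_path_eq: "sale I S p1 + sale I S qn = pg + S + th"
  using value_low_types_mkt[OF mass_mkt_pos, of th] value_low_types[of th] mkt_path_le cutoffs
  by simp

lemma I_le_qn: "I \<le> qn"
  using sale_geD(1)[OF qn_lt_th[OF mass_mkt_pos] non_sale_ge_th[OF mass_mkt_pos]] .

lemma non_sale_eq: "sale I S qn = qn + S"
  using I_le_qn by (simp add: sale_def)

lemma total_mkt_eq: "total_mkt = qn * mass_mkt"
proof (rule antisym[OF le_mult_of_forall_small_increment[OF S_pos mass_mkt_pos]])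
  show "qn * mass_mkt \<le> total_mkt" using non_break_even unfolding profit_mkt_seller by simp
  fix e :: real assume e: "0 < e" "e < S"
  define q where "q = qn + e"
  have sale_q: "sale I S q = qn + S + e" using I_le_qn e by (simp add: q_def sale_def)
  define W where "W = (\<lambda>\<theta>. (1 - recipient \<theta>) * indicator {\<theta>. max (sale I S qn) \<theta> < sale I S q} \<theta>)"
  have Wm: "W \<in> borel_measurable borel" unfolding W_def
    by (intro borel_measurable_times borel_measurable_diff weights_measurable borel_measurable_indicator
        borel_open open_Collect_less continuous_intros) auto
  have W1: "\<forall>x\<in>{0..1}. \<bar>W x\<bar> \<le> 1" using weights_bounded(3) by (auto simp: W_def indicator_def)
  have n_th: "th \<le> qn + S" using non_sale_ge_th[OF mass_mkt_pos] non_sale_eq by simp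
  have "total_mkt - q * mass_mkt \<le> profit f W q"
  proof (rule profit_ge_of_pointwise_le[OF f_int f_nn Wm W1 mkt_seller_has_integral])
    fix \<theta> :: real assume \<theta>: "\<theta> \<in> {0..1}"
    show "mkt_seller \<theta> * f \<theta> * (\<theta> - q) \<le> W \<theta> * f \<theta> * (\<theta> - q)"
    proof (cases "\<theta> \<le> thg")
      case True
      then show ?thesis using n_th non_sale_eq sale_q e
        by (auto simp: W_def mkt_seller_def recipient_def)
    next
      case False
      have "q < \<theta>" using False thg_eq non_sale_le non_sale_eq e by (simp add: q_def)
      then show ?thesis using False \<theta> f_nn th_lt_thg
        by (auto simp: W_def mkt_seller_def recipient_def indicator_def)
    qed
  qed
  moreover have "profit f W q \<le> 0" unfolding W_def by (rule non_deviation)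
  ultimately show "total_mkt \<le> (qn + e) * mass_mkt" by (simp add: q_def)
qed

lemma I_le_p1: "I \<le> p1"
proof (rule ccontr)
  assume "\<not> I \<le> p1"
  then have "p1 + qn + S = pg + S + th" using mkt_path_eq non_sale_eq by (simp add: sale_def)
  then show False using \<open>\<not> I \<le> p1\<close> pg_ge_I qn_lt_th[OF mass_mkt_pos] by simp
qed

lemma p1_eq: "p1 = pg + th - qn - S"
  using mkt_path_eq non_sale_eq I_le_p1 by (simp add: sale_def)

lemma p1_le_qn: "p1 \<le> qn"
  using mkt_break_even mass_mkt_pos unfolding profit_mkt_seller total_mkt_eq
  by (simp add: algebra_simps mult_le_cancel_right)

text \<open>A t = 1 market buyer offering slightly more than p1 attracts every low type, whatever
  the path it would otherwise take, and only higher types.\<close>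

lemma total_le_p1: "total_gov + total_mkt \<le> p1 * (mass_gov + mass_mkt)"
proof (rule le_mult_of_forall_small_increment[of "th - qn"])
  show "0 < th - qn" "0 < mass_gov + mass_mkt"
    using qn_lt_th[OF mass_mkt_pos] mass_low_types_pos by simp_all
  fix e :: real assume e: "0 < e" "e < th - qn"
  define p where "p = p1 + e"
  have sale_p: "sale I S p = sale I S p1 + e" using I_le_p1 e by (simp add: p_def sale_def)
  define W where "W = (\<lambda>\<theta>. indicator {\<theta>. V \<theta> < sale I S p + max (sale I S qn) \<theta>} \<theta> :: real)"
  have Wm: "W \<in> borel_measurable borel" unfolding W_def value_fn_eq
    by (intro borel_measurable_indicator borel_open open_Collect_less continuous_intros)
  have W1: "\<forall>x\<in>{0..1}. \<bar>W x\<bar> \<le> 1" by (auto simp: W_def indicator_def)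
  have "total_gov - p * mass_gov + (total_mkt - p * mass_mkt) \<le> profit f W p"
  proof (rule profit_ge_of_pointwise_le[OF f_int f_nn Wm W1
        has_integral_add[OF rec_seller_has_integral mkt_seller_has_integral]])
    fix \<theta> :: real assume \<theta>: "\<theta> \<in> {0..1}"
    show "rec_seller \<theta> * f \<theta> * (\<theta> - p) + mkt_seller \<theta> * f \<theta> * (\<theta> - p)
        \<le> W \<theta> * f \<theta> * (\<theta> - p)"
    proof (cases "\<theta> \<le> th")
      case True
      then have "W \<theta> = 1"
        using value_low_types[of \<theta>] \<theta> mkt_path_eq sale_p e non_sale_ge_th[OF mass_mkt_pos]
        by (simp add: W_def)
      then show ?thesis using True by (simp add: rec_seller_def mkt_seller_def algebra_simps)
    next
      case False
      have "p < \<theta>" using False p1_le_qn e by (simp add: p_def)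
      then show ?thesis
        using False \<theta> f_nn by (auto simp: W_def rec_seller_def mkt_seller_def indicator_def)
    qed
  qed
  moreover have "profit f W p \<le> 0" unfolding W_def by (rule mkt_deviation)
  ultimately show "total_gov + total_mkt \<le> (p1 + e) * (mass_gov + mass_mkt)"
    by (simp add: p_def algebra_simps)
qed

lemma avg_gov_eq: "avg_gov f th sig = th - S"
  using total_gov_eq mass_gov_pos by (simp add: avg_gov_def total_gov_def mass_gov_def)

lemma avg_mkt_eq: "avg_mkt f th sig = qn"
  using total_mkt_eq mass_mkt_pos by (simp add: avg_mkt_def total_mkt_def mass_mkt_def)

lemma th_sub_S_lt_qn: "th - S < qn"
proof -
  have le: "(th - S) * mass_gov + qn * mass_mkt \<le> p1 * (mass_gov + mass_mkt)"
    using total_le_p1 total_gov_eq total_mkt_eq by simp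
  also have "\<dots> \<le> qn * (mass_gov + mass_mkt)"
    using p1_le_qn mass_low_types_pos by (simp add: mult_right_mono)
  finally have "(th - S) * mass_gov \<le> qn * mass_gov" by (simp add: algebra_simps)
  then have "th - S \<le> qn" using mass_gov_pos mult_le_cancel_right_pos by blast
  moreover have "qn \<noteq> th - S"
  proof
    assume qn: "qn = th - S"
    have "(th - S) * (mass_gov + mass_mkt) \<le> p1 * (mass_gov + mass_mkt)"
      using le[unfolded qn] by (simp add: distrib_left)
    then have "th - S \<le> p1" using mass_low_types_pos mult_le_cancel_right_pos by blast
    then have "p1 = qn" using p1_le_qn qn by simp
    then have "th = pg + S" using p1_eq qn by simp
    moreover have "cexp f 0 th = th - S"
      unfolding cexp_th total_gov_eq total_mkt_eq qn using mass_low_types_pos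
      by (simp add: field_simps)
    ultimately show False using cexp_lt_above_theta0[of th] theta0(3) th_le_1 by simp
  qed
  ultimately show ?thesis by simp
qed

lemma qn_lt_pg: "qn < pg"
proof -
  have "qn \<le> pg" using non_sale_le non_sale_eq by simp
  moreover have "qn \<noteq> pg"
  proof
    assume "qn = pg"
    then have "p1 = th - S" using p1_eq by simp
    then have "(th - S) * mass_gov + qn * mass_mkt \<le> (th - S) * (mass_gov + mass_mkt)"
      using total_le_p1 total_gov_eq total_mkt_eq by simp
    then have "qn * mass_mkt \<le> (th - S) * mass_mkt" by (simp add: algebra_simps)
    then show False using th_sub_S_lt_qn mass_mkt_pos mult_le_cancel_right_pos by (metis not_le)
  qed
  ultimately show ?thesis by simp
qed

lemma th_lt_theta0: "th < \<theta>0"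
proof (rule below_theta0[OF cutoffs(1) th_le_1])
  have "(th - S) * mass_mkt < qn * mass_mkt" using th_sub_S_lt_qn mass_mkt_pos by simp
  then have "(th - S) * (mass_gov + mass_mkt) < total_gov + total_mkt"
    unfolding total_gov_eq total_mkt_eq by (simp add: algebra_simps)
  then show "th - S < cexp f 0 th"
    unfolding cexp_th using mass_low_types_pos by (simp add: field_simps)
qed

theorem short_lived_properties:
  "avg_gov f th sig < avg_mkt f th sig \<and> avg_mkt f th sig < pg
   \<and> th < \<theta>0 \<and> \<theta>0 < thg \<and> thg = pg + S \<and> pg < 2 * \<theta>0 - cexp f 0 \<theta>0"
proof -
  have "pg \<le> 2 * qn - th + S" using p1_eq p1_le_qn by simp
  then have "pg < 2 * \<theta>0 - cexp f 0 \<theta>0"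
    using qn_lt_th[OF mass_mkt_pos] th_lt_theta0 theta0(2) by simp
  then show ?thesis
    using avg_gov_eq avg_mkt_eq th_sub_S_lt_qn qn_lt_pg th_lt_theta0 thg_eq theta0(3) by simp
qed

end

theorem theorem3:
  fixes f :: "real \<Rightarrow> real" and I S pg \<theta>0 p0 :: real
    and th thg th2 p1 qg qn :: real and sig :: "real \<Rightarrow> real"
  assumes I_pos: "I > 0" and S_pos: "S > 0"
    and f_pos: "\<forall>x\<in>{0..1}. f x > 0"
    and f_int: "f integrable_on {0..1}" and f_mass: "integral {0..1} f = 1"
    and f_lc: "strictly_log_concave_on {0..1} f"
    and f_reg: "\<forall>b\<in>{0<..1}. strict_mono_on {0<..<b} (\<lambda>a. 2 * cexp f a b - cexp f 0 a)"
    and th0: "0 < \<theta>0" "\<theta>0 < 1" "\<theta>0 - S = cexp f 0 \<theta>0"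
    and th0_unique: "\<forall>x\<in>{0<..<1}. x - S = cexp f 0 x \<longrightarrow> x = \<theta>0"
    and p0_def: "p0 = cexp f 0 \<theta>0" and p0_I: "p0 \<ge> I"
    and pg: "p0 < pg" "pg < 1 - S"
    and eq: "transparent_eq I S pg f th thg th2 sig p1 qg qn"
    and short_lived: "thg = th2"
  shows "avg_gov f th sig < avg_mkt f th sig \<and> avg_mkt f th sig < pg
       \<and> th < \<theta>0 \<and> \<theta>0 < thg \<and> thg = pg + S
       \<and> pg < 2 * \<theta>0 - cexp f 0 \<theta>0"
proof -
  interpret transparent_short_lived I S pg f th thg p1 qg qn sig \<theta>0
    by unfold_locales (use S_pos f_pos f_int f_lc pg p0_I p0_def th0 eq[folded short_lived] in auto)
  show ?thesis by (rule short_lived_properties)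
qed

end
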